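(* Let $k,t\ge 2$ be integers and let $F$ be a $(k,t,k)$-pattern with $W^k(F)=W^{k-1}(F)=\cdots=W^{k-g(k)}(F)=0$. Then $F$ is homogeneous.
   Context: For $k,t\ge 2$ and $s\in\mathbb{N}$, a $(k,t,s)$-pattern is a $k$-uniform hypergraph $F$ with a partition $V(F)=V_1\cup\cdots\cup V_t$ into parts of size $s$ such that whether $S\in\binom{V(F)}{k}$ is an edge depends only on $(|S\cap V_1|,\ldots,|S\cap V_t|)$; $F$ is homogeneous if it is empty or complete. For a finite set $V$ with $|V|\ge 2k\ge 2r$ and $f\colon\binom{V}{k}\to\mathbb{R}$, \[ W^r(f)=\left(\mathbb{E}_{(a_1,b_1,\ldots,a_r,b_r)}\Big(\mathbb{E}_{R}\,(-1)^{|R\cap\{b_1,\ldots,b_r\}|}f(R)\Big)^2\right)^{1/2}, \] where $(a_1,b_1,\ldots,a_r,b_r)$ is a uniformly random sequence of $2r$ distinct elements of $V$, and $R$ is a uniformly random $k$-subset of $V$ with $|R\cap\{a_i,b_i\}|=1$ for each $i\in[r]$; $W^r(F)=W^r(\mathbf{1}_F)$ with $\mathbf{1}_F$ the edge indicator. $g(k)$ is the smallest integer $g\ge 0$ such that for each integer $m\in[2,k]$, the system $\sum_{0\le i\le r}(-1)^i\binom{r}{i}\alpha_i=0$ for $r=m-g,\ldots,m$, with $\vec\alpha=(\alpha_0,\ldots,\alpha_m)\in\{0,1\}^{m+1}$, has only the solutions $(0,\ldots,0)$ and $(1,\ldots,1)$. *)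

theory Defs
  imports Complex_Main
begin

definition ksubsets :: "'a set \<Rightarrow> nat \<Rightarrow> 'a set set" where
  "ksubsets V k = {S. S \<subseteq> V \<and> card S = k}"

definition is_pattern :: "nat \<Rightarrow> nat \<Rightarrow> nat \<Rightarrow> 'a set \<Rightarrow> 'a set set \<Rightarrow> bool" where
  "is_pattern k t s V F \<longleftrightarrow>
     finite V \<and> F \<subseteq> ksubsets V k \<and>
     (\<exists>P :: nat \<Rightarrow> 'a set.
        (\<forall>i<t. P i \<subseteq> V \<and> card (P i) = s) \<and>
        (\<forall>i<t. \<forall>j<t. i \<noteq> j \<longrightarrow> P i \<inter> P j = {}) \<and>
        (\<Union>i<t. P i) = V \<and>
        (\<forall>S\<in>ksubsets V k. \<forall>T\<in>ksubsets V k.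
            (\<forall>i<t. card (S \<inter> P i) = card (T \<inter> P i)) \<longrightarrow> (S \<in> F \<longleftrightarrow> T \<in> F)))"

definition homogeneous :: "'a set \<Rightarrow> nat \<Rightarrow> 'a set set \<Rightarrow> bool" where
  "homogeneous V k F \<longleftrightarrow> F = {} \<or> F = ksubsets V k"

definition avg :: "'b set \<Rightarrow> ('b \<Rightarrow> real) \<Rightarrow> real" where
  "avg A h = (\<Sum>x\<in>A. h x) / real (card A)"

text \<open>Sequences (a_1,b_1,...,a_r,b_r) of 2r distinct elements of V, as lists;
  a_(i+1) = xs!(2i), b_(i+1) = xs!(2i+1).\<close>
definition seqs :: "'a set \<Rightarrow> nat \<Rightarrow> 'a list set" where
  "seqs V r = {xs. length xs = 2 * r \<and> distinct xs \<and> set xs \<subseteq> V}"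

definition Rsets :: "'a set \<Rightarrow> nat \<Rightarrow> nat \<Rightarrow> 'a list \<Rightarrow> 'a set set" where
  "Rsets V k r xs = {R \<in> ksubsets V k. \<forall>i<r. card (R \<inter> {xs ! (2*i), xs ! (2*i+1)}) = 1}"

definition bset :: "nat \<Rightarrow> 'a list \<Rightarrow> 'a set" where
  "bset r xs = {xs ! (2*i+1) | i. i < r}"

definition Wnorm :: "'a set \<Rightarrow> nat \<Rightarrow> nat \<Rightarrow> ('a set \<Rightarrow> real) \<Rightarrow> real" where
  "Wnorm V k r f =
     sqrt (avg (seqs V r)
       (\<lambda>xs. (avg (Rsets V k r xs)
                (\<lambda>R. (-1) ^ card (R \<inter> bset r xs) * f R))\<^sup>2))"

definition WF :: "'a set \<Rightarrow> nat \<Rightarrow> nat \<Rightarrow> 'a set set \<Rightarrow> real" where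
  "WF V k r F = Wnorm V k r (\<lambda>S. if S \<in> F then 1 else 0)"

definition g_ok :: "nat \<Rightarrow> nat \<Rightarrow> bool" where
  "g_ok k g \<longleftrightarrow> (\<forall>m\<in>{2..k}. \<forall>\<alpha> :: nat \<Rightarrow> bool.
      (\<forall>r\<in>{m - g..m}. (\<Sum>i\<le>r. (-1) ^ i * int (r choose i) * (if \<alpha> i then 1 else 0)) = 0)
      \<longrightarrow> (\<forall>i\<le>m. \<not> \<alpha> i) \<or> (\<forall>i\<le>m. \<alpha> i))"

definition gfun :: "nat \<Rightarrow> nat" where
  "gfun k = (LEAST g. g_ok k g)"

end

theory Submission
  imports Defs "HOL-Library.Function_Algebras"
begin

text \<open>
  Since F is a pattern, whether a k-set R lies in F is a 0/1 function F_ind of its profile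
  v \<in> \<nat>^t, v_i = |R \<inter> V_i|. Write \<Delta>(p,q) f (v) = f (v + e_p) - f (v + e_q). If every a_i
  lies in a part p_i and every b_i in a part q_i, the inner average in W^r(F) is an average, over
  (k - r)-sets S, of \<Delta>(p_1,q_1) ... \<Delta>(p_r,q_r) F_ind at the profile of S. By induction on the
  level |v|, these differences of order k - |v| are constant on each level, so W^r(F) = 0 for
  r \<in> [k - g(k), k] makes all of them vanish.

  It follows that F_ind (x + e_p) = F_ind (x + e_q) whenever |x| = k - 1, by induction on the mass
  of x outside the coordinates p, q: that mass can be traded for further difference directions,
  so the r-th differences of F_ind along the line through x in direction (p, q) vanish for
  r \<in> [m - g(k), m], where m = x_p + x_q + 1. They are alternating binomial sums of a 0/1
  sequence, which by the definition of g(k) must be constant. Hence F_ind is constant on level k,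
  i.e. F is homogeneous.
\<close>

section \<open>Iterated differences on \<nat>^t\<close>

definition unit_vec :: "nat \<Rightarrow> nat \<Rightarrow> nat" where
  "unit_vec p = (0 :: nat \<Rightarrow> nat)(p := 1)"

definition supported :: "nat \<Rightarrow> (nat \<Rightarrow> nat) \<Rightarrow> bool" where
  "supported t v \<longleftrightarrow> (\<forall>i\<ge>t. v i = 0)"

definition level :: "nat \<Rightarrow> (nat \<Rightarrow> nat) \<Rightarrow> nat" where
  "level t v = (\<Sum>i<t. v i)"

definition level_off :: "nat \<Rightarrow> nat \<Rightarrow> nat \<Rightarrow> (nat \<Rightarrow> nat) \<Rightarrow> nat" where
  "level_off t p q v = (\<Sum>i\<in>{..<t} - {p, q}. v i)"

definition directions :: "nat \<Rightarrow> (nat \<times> nat) list \<Rightarrow> bool" where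
  "directions t P \<longleftrightarrow> (\<forall>(a, b)\<in>set P. a < t \<and> b < t \<and> a \<noteq> b)"

lemma unit_vec_apply [simp]: "unit_vec p i = (if i = p then 1 else 0)"
  by (simp add: unit_vec_def)

lemma supported_add [simp]: "supported t (v + w) \<longleftrightarrow> supported t v \<and> supported t w"
  by (auto simp: supported_def)

lemma supported_unit_vec [simp]: "supported t (unit_vec p) \<longleftrightarrow> p < t"
  by (auto simp: supported_def)

lemma level_add: "level t (v + w) = level t v + level t w"
  by (simp add: level_def sum.distrib)

lemma level_unit_vec: "p < t \<Longrightarrow> level t (unit_vec p) = 1"
  by (simp add: level_def)

lemma level_off_add: "level_off t p q (v + w) = level_off t p q v + level_off t p q w"
  by (simp add: level_off_def sum.distrib)

lemma level_off_unit_vec: "level_off t p q (unit_vec u) = (if u < t \<and> u \<noteq> p \<and> u \<noteq> q then 1 else 0)"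
  by (simp add: level_off_def)

lemma level_off_le_level: "level_off t p q v \<le> level t v"
  unfolding level_off_def level_def by (rule sum_mono2) auto

lemma level_eq_level_off:
  assumes "p < t" "q < t" "p \<noteq> q"
  shows "level t v = v p + v q + level_off t p q v"
proof -
  have "level t v = sum v {p, q} + level_off t p q v"
    unfolding level_def level_off_def using assms by (subst sum.subset_diff[of "{p, q}"]) auto
  then show ?thesis using assms by simp
qed

lemma level_eq_0_iff: "supported t v \<Longrightarrow> level t v = 0 \<longleftrightarrow> v = 0"
  by (auto simp: level_def supported_def fun_eq_iff not_less[symmetric])

fun delta :: "(nat \<times> nat) list \<Rightarrow> ((nat \<Rightarrow> nat) \<Rightarrow> real) \<Rightarrow> (nat \<Rightarrow> nat) \<Rightarrow> real" where
  "delta [] f v = f v"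
| "delta ((a, b) # P) f v = delta P f (v + unit_vec a) - delta P f (v + unit_vec b)"

lemma delta_shift: "delta P (\<lambda>v. f (v + w)) u = delta P f (u + w)"
  by (induction P arbitrary: u) (auto simp: ac_simps)

lemma delta_diff: "delta P (\<lambda>v. f v - g v) u = delta P f u - delta P g u"
  by (induction P arbitrary: u) auto

lemma delta_append: "delta (P @ Q) f u = delta P (delta Q f) u"
  by (induction P arbitrary: u) auto

lemma delta_eq_0I:
  assumes "\<forall>(a, b)\<in>set P. a \<in> S \<and> b \<in> S" and "S \<subseteq> {..<t}"
    and "\<And>y. \<forall>i. i \<notin> S \<longrightarrow> y i = 0 \<Longrightarrow> level t y = length P \<Longrightarrow> f (w + y) = 0"
  shows "delta P f w = 0"
  using assms
proof (induction P arbitrary: w)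
  case Nil
  have "f (w + 0) = 0" by (rule Nil.prems(3)) (auto simp: level_def)
  then show ?case by simp
next
  case (Cons ab P)
  obtain a b where ab: "ab = (a, b)" by fastforce
  have "delta P f (w + unit_vec c) = 0" if "c \<in> S" for c
  proof (rule Cons.IH)
    fix y assume y: "\<forall>i. i \<notin> S \<longrightarrow> y i = 0" "level t y = length P"
    have "level t (unit_vec c + y) = length (ab # P)"
      using that Cons.prems(2) y(2) by (auto simp: level_add level_unit_vec)
    moreover have "\<forall>i. i \<notin> S \<longrightarrow> (unit_vec c + y) i = 0"
      using y(1) that by auto
    ultimately have "f (w + (unit_vec c + y)) = 0"
      by (rule Cons.prems(3)[rotated])
    then show "f (w + unit_vec c + y) = 0"
      by (simp only: add.assoc)
  qed (use Cons.prems in auto)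
  then show ?case using Cons.prems(1) ab by simp
qed

lemma level_remove:
  assumes "p < t" shows "level t v = v p + (\<Sum>i\<in>{..<t} - {p}. v i)"
  unfolding level_def using assms by (simp add: sum.remove)

lemma constant_on_level:
  assumes "0 < t"
    and step: "\<And>y u v. supported t y \<Longrightarrow> Suc (level t y) = n \<Longrightarrow> u < t \<Longrightarrow> v < t \<Longrightarrow>
      G (y + unit_vec u) = G (y + unit_vec v)"
    and "supported t x" "level t x = n"
  shows "G x = G (0(0 := n))"
  using assms(3,4)
proof (induction "n - x 0" arbitrary: x rule: less_induct)
  case less
  show ?case
  proof (cases "\<exists>u\<in>{..<t} - {0}. x u \<noteq> 0")
    case False
    then have "x = 0(0 := n)"
      using less.prems level_remove[OF \<open>0 < t\<close>, of x] by (auto simp: supported_def fun_eq_iff not_less[symmetric])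
    then show ?thesis by simp
  next
    case True
    then obtain u where u: "u < t" "u \<noteq> 0" "x u \<noteq> 0" by auto
    define y where "y = x(u := x u - 1)"
    have x: "x = y + unit_vec u" using u by (auto simp: y_def fun_eq_iff)
    have "supported t y" using less.prems(1) by (auto simp: y_def supported_def)
    moreover have "Suc (level t y) = n"
      using less.prems(2) u(1) by (simp add: x level_add level_unit_vec)
    ultimately have y: "supported t y" "Suc (level t y) = n" .
    have "G x = G (y + unit_vec 0)" using step[OF y u(1) \<open>0 < t\<close>] x by simp
    also have "\<dots> = G (0(0 := n))"
    proof (rule less.hyps)
      have "y 0 \<le> level t y" using level_remove[OF \<open>0 < t\<close>, of y] by simp
      then show "n - (y + unit_vec 0) 0 < n - x 0" using x u(2) y(2) by simp
    qed (use y \<open>0 < t\<close> in \<open>auto simp: level_add level_unit_vec\<close>)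
    finally show ?thesis .
  qed
qed

fun seq_diff :: "nat \<Rightarrow> (nat \<Rightarrow> real) \<Rightarrow> nat \<Rightarrow> real" where
  "seq_diff 0 h j = h j"
| "seq_diff (Suc r) h j = seq_diff r h j - seq_diff r h (Suc j)"

lemma seq_diff_eq_sum: "seq_diff r h j = (\<Sum>i\<le>r. (-1) ^ i * real (r choose i) * h (j + i))"
proof (induction r arbitrary: j)
  case 0
  then show ?case by simp
next
  case (Suc r)
  have "(\<Sum>i\<le>Suc r. (-1) ^ i * real (Suc r choose i) * h (j + i))
      = h j + (\<Sum>i\<le>r. (-1) ^ Suc i * real (r choose i) * h (j + Suc i))
            + (\<Sum>i\<le>r. (-1) ^ Suc i * real (r choose Suc i) * h (j + Suc i))"
    by (simp add: sum.atMost_Suc_shift sum.distrib algebra_simps sum_subtractf sum_negf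
        del: sum.atMost_Suc)
  moreover have "(\<Sum>i\<le>r. (-1) ^ i * real (r choose i) * h (j + i))
      = h j + (\<Sum>i\<le>r. (-1) ^ Suc i * real (r choose Suc i) * h (j + Suc i))"
  proof -
    have "(\<Sum>i\<le>r. (-1) ^ i * real (r choose i) * h (j + i))
        = (\<Sum>i\<le>Suc r. (-1) ^ i * real (r choose i) * h (j + i))"
      by simp
    then show ?thesis by (simp add: sum.atMost_Suc_shift del: sum.atMost_Suc)
  qed
  ultimately show ?case
    using Suc.IH[of j] Suc.IH[of "Suc j"] by (simp add: sum_negf)
qed

lemma g_ok_self: "g_ok k k"
  unfolding g_ok_def
proof (intro ballI allI impI)
  fix m and \<alpha> :: "nat \<Rightarrow> bool"
  assume m: "m \<in> {2..k}"
    and E: "\<forall>r\<in>{m - k..m}. (\<Sum>i\<le>r. (-1) ^ i * int (r choose i) * (if \<alpha> i then 1 else 0)) = 0"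
  have "\<not> \<alpha> r" if "r \<le> m" for r
    using that
  proof (induction r rule: less_induct)
    case (less r)
    have "(\<Sum>i\<le>r. (-1) ^ i * int (r choose i) * (if \<alpha> i then 1 else 0)) = 0"
      using E m less.prems by auto
    moreover have "(\<Sum>i<r. (-1) ^ i * int (r choose i) * (if \<alpha> i then 1 else 0)) = 0"
      using less by (intro sum.neutral) auto
    ultimately show ?case by (auto simp: lessThan_Suc_atMost[symmetric])
  qed
  then show "(\<forall>i\<le>m. \<not> \<alpha> i) \<or> (\<forall>i\<le>m. \<alpha> i)" by blast
qed

lemma g_ok_gfun: "g_ok k (gfun k)"
  unfolding gfun_def by (rule LeastI[of _ k]) (rule g_ok_self)

lemma g_ok_seq_diff:
  assumes "g_ok k g" "m \<in> {2..k}" and h01: "\<And>i. h i = 0 \<or> h i = 1"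
    and "\<And>r. r \<in> {m - g..m} \<Longrightarrow> seq_diff r h 0 = 0" and "i \<le> m"
  shows "h i = h 0"
proof -
  define \<alpha> where "\<alpha> i \<longleftrightarrow> h i = 1" for i
  have h: "h i = real_of_int (if \<alpha> i then 1 else 0)" for i
    using h01[of i] by (auto simp: \<alpha>_def)
  have "(\<Sum>i\<le>r. (-1) ^ i * int (r choose i) * (if \<alpha> i then 1 else 0)) = 0" if "r \<in> {m - g..m}" for r
  proof -
    have "real_of_int (\<Sum>i\<le>r. (-1) ^ i * int (r choose i) * (if \<alpha> i then 1 else 0)) = seq_diff r h 0"
      by (simp add: seq_diff_eq_sum h)
    then show ?thesis using assms(4)[OF that] by (simp only: of_int_eq_0_iff)
  qed
  then have "(\<forall>i\<le>m. \<not> \<alpha> i) \<or> (\<forall>i\<le>m. \<alpha> i)"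
    using assms(1,2) unfolding g_ok_def by blast
  then show ?thesis using \<open>i \<le> m\<close> by (auto simp: h)
qed

lemma delta_replicate:
  assumes "p \<noteq> q"
  shows "delta (replicate r (p, q)) f (z(p := a, q := b))
    = seq_diff r (\<lambda>i. f (z(p := a + b + r - i, q := i))) b"
proof (induction r arbitrary: a b)
  case 0
  have "a + b + 0 - b = a" by simp
  then show ?case by (simp only: delta.simps seq_diff.simps replicate_0)
next
  case (Suc r)
  have "z(p := a, q := b) + unit_vec p = z(p := Suc a, q := b)"
    "z(p := a, q := b) + unit_vec q = z(p := a, q := Suc b)"
    using assms by (auto simp: fun_eq_iff)
  moreover have "Suc a + b + r = a + b + Suc r" "a + Suc b + r = a + b + Suc r" by simp_all
  ultimately show ?case by (simp only: replicate_Suc delta.simps Suc.IH seq_diff.simps)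
qed

lemma delta_replicate_eq_0:
  assumes pq: "p < t" "q < t"
    and step: "\<And>v. supported t v \<Longrightarrow> Suc (level t v) = k \<Longrightarrow> level_off t p q v < d \<Longrightarrow>
      f (v + unit_vec p) = f (v + unit_vec q)"
    and "0 < r" "supported t v" "level t v + r = k" "level_off t p q v < d"
  shows "delta (replicate r (p, q)) f v = 0"
proof -
  obtain r' where r: "r = Suc r'" using \<open>0 < r\<close> gr0_implies_Suc by blast
  have "delta (replicate r (p, q)) f v = delta (replicate r' (p, q)) (delta [(p, q)] f) v"
    by (simp add: r replicate_append_same[symmetric] delta_append)
  also have "\<dots> = 0"
  proof (rule delta_eq_0I[where S = "{p, q}" and t = t])
    fix y assume y: "\<forall>i. i \<notin> {p, q} \<longrightarrow> y i = 0" "level t y = length (replicate r' (p, q))"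
    have "level_off t p q y = 0" unfolding level_off_def using y(1) by simp
    then show "delta [(p, q)] f (v + y) = 0"
      using step[of "v + y"] assms(5-7) y pq r
      by (auto simp: supported_def level_add level_off_add)
  qed (use pq in auto)
  finally show ?thesis .
qed

text \<open>Each unit of z at a coordinate u is moved onto w by the direction (u, p); the other
  term of that difference only involves G at points with less mass outside p and q.\<close>

lemma delta_transport:
  assumes pq: "p < t" "q < t"
  shows "supported t z \<Longrightarrow> z p = 0 \<Longrightarrow> z q = 0 \<Longrightarrow>
    \<exists>U. directions t U \<and> length U = level t z \<and>
      (\<forall>w. supported t w \<longrightarrow>
        (\<forall>v. supported t v \<longrightarrow> level t v = level t w + level t z \<longrightarrow>
          level_off t p q v < level_off t p q w + level t z \<longrightarrow> G v = 0) \<longrightarrow>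
        delta U G w = G (w + z))"
proof (induction "level t z" arbitrary: z)
  case 0
  then have "z = 0" using level_eq_0_iff by metis
  then show ?case by (intro exI[of _ "[]"]) (auto simp: directions_def level_def)
next
  case (Suc n)
  obtain u where u: "u < t" "z u \<noteq> 0"
    using Suc.hyps(2) sum.neutral[of "{..<t}" z] by (fastforce simp: level_def)
  have upq: "u \<noteq> p" "u \<noteq> q" using u Suc.prems by auto
  define z' where "z' = z(u := z u - 1)"
  have z: "z = z' + unit_vec u" using u by (auto simp: z'_def fun_eq_iff)
  have z': "supported t z'" "z' p = 0" "z' q = 0" using Suc.prems by (auto simp: z'_def supported_def)
  have "n = level t z'" using Suc.hyps(2) u(1) by (simp add: z level_add level_unit_vec)
  then obtain U where U: "directions t U" "length U = n" and
    transport: "\<And>w. supported t w \<Longrightarrow>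
      (\<forall>v. supported t v \<longrightarrow> level t v = level t w + n \<longrightarrow>
          level_off t p q v < level_off t p q w + n \<longrightarrow> G v = 0) \<Longrightarrow>
      delta U G w = G (w + z')"
    using Suc.hyps(1) z' by blast
  show ?case
  proof (intro exI[of _ "(u, p) # U"] conjI allI impI)
    show "directions t ((u, p) # U)" using U u pq upq by (auto simp: directions_def)
    show "length ((u, p) # U) = level t z" using U Suc.hyps(2) by simp
    fix w assume w: "supported t w"
      and vanish: "\<forall>v. supported t v \<longrightarrow> level t v = level t w + level t z \<longrightarrow>
        level_off t p q v < level_off t p q w + level t z \<longrightarrow> G v = 0"
    have "delta U G (w + unit_vec u) = G (w + unit_vec u + z')"
      by (rule transport)
        (use w u upq vanish Suc.hyps(2) in
          \<open>auto simp: level_add level_unit_vec level_off_add level_off_unit_vec\<close>)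
    moreover have "delta U G (w + unit_vec p) = 0"
    proof (rule delta_eq_0I[where S = "{..<t}" and t = t])
      fix y assume y: "\<forall>i. i \<notin> {..<t} \<longrightarrow> y i = 0" "level t y = length U"
      have "level_off t p q y \<le> n" using level_off_le_level[of t p q y] y(2) U(2) by simp
      then show "G (w + unit_vec p + y) = 0"
        using vanish w y pq U(2) Suc.hyps(2)
        by (auto simp: supported_def level_add level_unit_vec level_off_add level_off_unit_vec)
    qed (use U in \<open>auto simp: directions_def\<close>)
    ultimately show "delta ((u, p) # U) G w = G (w + z)" by (simp add: z ac_simps)
  qed
qed

section \<open>Functions with vanishing differences\<close>

locale vanishing_differences =
  fixes t k g :: nat and \<phi> :: "(nat \<Rightarrow> nat) \<Rightarrow> real"
  assumes t_pos: "0 < t" and g_ok: "g_ok k g"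
    and \<phi>_01: "\<phi> v = 0 \<or> \<phi> v = 1"
    and delta_\<phi>: "\<And>P v. directions t P \<Longrightarrow> k - g \<le> length P \<Longrightarrow> supported t v \<Longrightarrow>
      level t v + length P = k \<Longrightarrow> delta P \<phi> v = 0"
begin

lemma delta_replicate_\<phi>:
  assumes pq: "p < t" "q < t" "p \<noteq> q"
    and swap: "\<And>v. supported t v \<Longrightarrow> Suc (level t v) = k \<Longrightarrow> level_off t p q v < level t z \<Longrightarrow>
      \<phi> (v + unit_vec p) = \<phi> (v + unit_vec q)"
    and z: "supported t z" "z p = 0" "z q = 0"
    and r: "0 < r" "k - g \<le> r + level t z" and ab: "a + b + r + level t z = k"
  shows "delta (replicate r (p, q)) \<phi> (z(p := a, q := b)) = 0"
proof -
  define G where "G = delta (replicate r (p, q)) \<phi>"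
  define w where "w = (0 :: nat \<Rightarrow> nat)(p := a, q := b)"
  have w: "supported t w" "level t w = a + b" "level_off t p q w = 0"
    using pq level_eq_level_off[OF pq, of w] by (auto simp: w_def supported_def level_off_def)
  obtain U where U: "directions t U" "length U = level t z" and
    transport: "\<forall>v. supported t v \<longrightarrow> level t v = level t w + level t z \<longrightarrow>
        level_off t p q v < level_off t p q w + level t z \<longrightarrow> G v = 0 \<Longrightarrow>
      delta U G w = G (w + z)"
    using delta_transport[OF pq(1,2) z, of G] w(1) by blast
  have "delta U G w = G (w + z)"
    using transport delta_replicate_eq_0[OF pq(1,2) swap] r ab w by (auto simp: G_def)
  moreover have "w + z = z(p := a, q := b)" using z by (auto simp: w_def fun_eq_iff)
  moreover have "delta U G w = delta (U @ replicate r (p, q)) \<phi> w"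
    by (simp add: G_def delta_append)
  moreover have "\<dots> = 0"
    by (rule delta_\<phi>) (use U pq r ab w in \<open>auto simp: directions_def\<close>)
  ultimately show ?thesis by (simp add: G_def)
qed

text \<open>On the line z + i e_q + (m - i) e_p through x, the differences of order r \<in> [m - g, m]
  vanish by \<open>delta_replicate_\<phi>\<close>, so \<open>g_ok\<close> makes \<phi> constant there.\<close>

lemma \<phi>_swap:
  assumes pq: "p < t" "q < t" "p \<noteq> q"
  shows "supported t x \<Longrightarrow> Suc (level t x) = k \<Longrightarrow> \<phi> (x + unit_vec p) = \<phi> (x + unit_vec q)"
proof (induction "level_off t p q x" arbitrary: x rule: less_induct)
  case less
  define z where "z = x(p := 0, q := 0)"
  define m where "m = x p + x q + 1"
  have z: "supported t z" "z p = 0" "z q = 0" using less.prems(1) by (auto simp: z_def supported_def)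
  have "level_off t p q z = level_off t p q x" unfolding level_off_def z_def by (rule sum.cong) auto
  then have lz: "level t z = level_off t p q x" using level_eq_level_off[OF pq, of z] z by simp
  have mk: "m + level t z = k"
    using level_eq_level_off[OF pq, of x] less.prems(2) lz by (simp add: m_def)
  have vanish: "delta (replicate r (p, q)) \<phi> (z(p := a, q := b)) = 0"
    if "0 < r" "k - g \<le> r + level t z" "a + b + r + level t z = k" for r a b
    by (rule delta_replicate_\<phi>[OF pq _ z that]) (use less.hyps lz in auto)
  show ?case
  proof (cases "m \<le> g + 1")
    case True
    have "z(p := x p, q := x q) = x" by (auto simp: z_def)
    then have "delta (replicate 1 (p, q)) \<phi> x = 0"
      using vanish[of 1 "x p" "x q"] True mk by (simp add: m_def)
    then show ?thesis by simp
  next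
    case False
    define h where "h = (\<lambda>i. \<phi> (z(p := m - i, q := i)))"
    have diff_0: "seq_diff r h 0 = 0" if "r \<in> {m - g..m}" for r
    proof -
      have "m - r + 0 + r - i = m - i" for i using that by auto
      then have "seq_diff r h 0 = delta (replicate r (p, q)) \<phi> (z(p := m - r, q := 0))"
        by (simp add: delta_replicate[OF pq(3)] h_def)
      also have "\<dots> = 0" using vanish[of r "m - r" 0] that False mk by auto
      finally show ?thesis .
    qed
    have h_01: "h i = 0 \<or> h i = 1" for i by (simp add: h_def \<phi>_01)
    have "m \<in> {2..k}" using False mk by auto
    then have h_const: "h i = h 0" if "i \<le> m" for i
      by (rule g_ok_seq_diff[OF g_ok _ h_01 diff_0 that])
    have "x q \<le> m" "Suc (x q) \<le> m" by (simp_all add: m_def)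
    then have "h (x q) = h (Suc (x q))" using h_const by metis
    moreover have "x + unit_vec p = z(p := m - x q, q := x q)"
      "x + unit_vec q = z(p := m - Suc (x q), q := Suc (x q))"
      using pq by (auto simp: z_def m_def fun_eq_iff)
    ultimately show ?thesis by (simp add: h_def)
  qed
qed

lemma \<phi>_constant_on_level:
  assumes "supported t x" "level t x = k"
  shows "\<phi> x = \<phi> (0(0 := k))"
proof (rule constant_on_level[OF t_pos _ assms])
  fix y u v assume y: "supported t y" "Suc (level t y) = k" and uv: "u < t" "v < t"
  show "\<phi> (y + unit_vec u) = \<phi> (y + unit_vec v)"
    using \<phi>_swap[OF uv _ y] by (cases "u = v") auto
qed

end

section \<open>Patterns and the norms W^r\<close>

definition flat_pairs :: "('a \<times> 'a) list \<Rightarrow> 'a list" where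
  "flat_pairs prs = concat (map (\<lambda>(a, b). [a, b]) prs)"

lemma flat_pairs_simps [simp]:
  "flat_pairs [] = []" "flat_pairs ((a, b) # prs) = a # b # flat_pairs prs"
  by (simp_all add: flat_pairs_def)

lemma length_flat_pairs: "length (flat_pairs prs) = 2 * length prs"
  by (induction prs) auto

lemma nth_flat_pairs:
  "i < length prs \<Longrightarrow> flat_pairs prs ! (2 * i) = fst (prs ! i)"
  "i < length prs \<Longrightarrow> flat_pairs prs ! Suc (2 * i) = snd (prs ! i)"
proof (induction prs arbitrary: i)
  case (Cons ab prs)
  case 1
  then show ?case using Cons by (cases ab; cases i) auto
next
  case (Cons ab prs)
  case 2
  then show ?case using Cons by (cases ab; cases i) auto
qed simp_all

lemma mem_flat_pairs: "(a, b) \<in> set prs \<Longrightarrow> a \<in> set (flat_pairs prs) \<and> b \<in> set (flat_pairs prs)"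
  by (induction prs) auto

definition transversals :: "'a set \<Rightarrow> ('a \<times> 'a) list \<Rightarrow> nat \<Rightarrow> 'a set set" where
  "transversals U prs n = {R. R \<subseteq> U \<union> set (flat_pairs prs) \<and> card R = n + length prs \<and>
      (\<forall>(a, b)\<in>set prs. card (R \<inter> {a, b}) = 1)}"

lemma transversals_Nil: "transversals U [] n = {S. S \<subseteq> U \<and> card S = n}"
  by (simp add: transversals_def)

lemma finite_transversals: "finite U \<Longrightarrow> finite (transversals U prs n)"
  by (rule finite_subset[of _ "Pow (U \<union> set (flat_pairs prs))"]) (auto simp: transversals_def)

lemma transversals_Cons:
  assumes "finite U" "a \<noteq> b" "a \<notin> U \<union> set (flat_pairs prs)" "b \<notin> U \<union> set (flat_pairs prs)"
  shows "transversals U ((a, b) # prs) n = insert a ` transversals U prs n \<union> insert b ` transversals U prs n"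
proof -
  let ?X = "U \<union> set (flat_pairs prs)"
  have finite: "finite R" if "R \<subseteq> ?X \<union> {a, b}" for R
    using that assms(1) finite_subset by blast
  have other_pairs: "R \<inter> {a', b'} = S \<inter> {a', b'}" if "(a', b') \<in> set prs" "R - {a, b} = S - {a, b}" for R S a' b'
  proof -
    have "a' \<notin> {a, b}" "b' \<notin> {a, b}" using mem_flat_pairs[OF that(1)] assms(3,4) by auto
    then have "R \<inter> {a', b'} = (R - {a, b}) \<inter> {a', b'}" "S \<inter> {a', b'} = (S - {a, b}) \<inter> {a', b'}"
      by auto
    then show ?thesis using that(2) by simp
  qed
  show ?thesis
  proof (intro equalityI subsetI)
    fix R assume R: "R \<in> transversals U ((a, b) # prs) n"
    then have "card (R \<inter> {a, b}) = 1" by (simp add: transversals_def)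
    then obtain c where c: "R \<inter> {a, b} = {c}" by (rule card_1_singletonE)
    have c': "c \<in> R" "c = a \<or> c = b" using c by blast+
    have "R - {c} - {a, b} = R - {a, b}" using c' by auto
    then have "(R - {c}) \<inter> {a', b'} = R \<inter> {a', b'}" if "(a', b') \<in> set prs" for a' b'
      using other_pairs that by blast
    then have "R - {c} \<in> transversals U prs n"
      using R c c' finite[of R] by (auto simp: transversals_def card_Diff_singleton)
    moreover have "R = insert c (R - {c})" using c' by auto
    ultimately show "R \<in> insert a ` transversals U prs n \<union> insert b ` transversals U prs n"
      using c' by blast
  next
    fix R assume "R \<in> insert a ` transversals U prs n \<union> insert b ` transversals U prs n"
    then obtain c S where S: "S \<in> transversals U prs n" and c: "c = a \<or> c = b" "R = insert c S" by auto
    have "S \<subseteq> ?X" using S by (simp add: transversals_def)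
    then have "finite S" "c \<notin> S" "R \<inter> {a, b} = {c}" using finite[of S] c assms by auto
    then show "R \<in> transversals U ((a, b) # prs) n"
      using S c other_pairs[of _ _ R S] by (auto simp: transversals_def)
  qed
qed

lemma sum_insert_image_Un:
  assumes "finite T" "a \<noteq> b" "\<forall>S\<in>T. a \<notin> S \<and> b \<notin> S"
  shows "(\<Sum>R\<in>insert a ` T \<union> insert b ` T. h R) = (\<Sum>S\<in>T. h (insert a S) + h (insert b S))"
proof -
  have "inj_on (insert c) T" if "c = a \<or> c = b" for c
    using assms(3) that by (auto simp: inj_on_def)
  moreover have "insert a ` T \<inter> insert b ` T = {}" using assms(2,3) by (auto dest!: sym[of "insert a _"])
  ultimately show ?thesis
    using assms(1) by (simp add: sum.union_disjoint sum.reindex sum.distrib)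
qed

lemma Rsets_flat_pairs:
  assumes "set (flat_pairs prs) \<subseteq> V" "length prs \<le> k"
  shows "Rsets V k (length prs) (flat_pairs prs) = transversals (V - set (flat_pairs prs)) prs (k - length prs)"
proof -
  have "(\<forall>i<length prs. card (R \<inter> {flat_pairs prs ! (2 * i), flat_pairs prs ! (2 * i + 1)}) = 1)
      \<longleftrightarrow> (\<forall>(a, b)\<in>set prs. card (R \<inter> {a, b}) = 1)" for R
    by (simp add: nth_flat_pairs all_set_conv_all_nth case_prod_beta)
  moreover have "V - set (flat_pairs prs) \<union> set (flat_pairs prs) = V" using assms(1) by auto
  ultimately show ?thesis
    using assms(2) by (auto simp: Rsets_def transversals_def ksubsets_def)
qed

lemma bset_flat_pairs: "bset (length prs) (flat_pairs prs) = snd ` set prs"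
  by (auto simp: bset_def nth_flat_pairs set_conv_nth) (metis nth_flat_pairs(2))

lemma avg_eq_0_iff: "avg A h = 0 \<longleftrightarrow> sum h A = 0"
  by (cases "finite A") (auto simp: avg_def)

lemma Wnorm_eq_0_imp_sum_eq_0:
  assumes "finite V" "Wnorm V k r f = 0" "xs \<in> seqs V r"
  shows "(\<Sum>R\<in>Rsets V k r xs. (-1) ^ card (R \<inter> bset r xs) * f R) = 0"
proof -
  define H where "H ys = (avg (Rsets V k r ys) (\<lambda>R. (-1) ^ card (R \<inter> bset r ys) * f R))\<^sup>2" for ys
  have "seqs V r \<subseteq> {xs. set xs \<subseteq> V \<and> length xs = 2 * r}" by (auto simp: seqs_def)
  then have fin: "finite (seqs V r)" using finite_lists_length_eq[OF assms(1)] finite_subset by blast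
  have "sum H (seqs V r) = 0"
    using assms(2) by (simp add: Wnorm_def H_def avg_eq_0_iff)
  moreover have "0 \<le> H ys" for ys by (simp add: H_def)
  ultimately have "H xs = 0" using sum_nonneg_eq_0_iff[OF fin, of H] assms(3) by blast
  then show ?thesis by (simp add: H_def avg_eq_0_iff)
qed

locale pattern_partition =
  fixes t k :: nat and V :: "'a set" and part :: "nat \<Rightarrow> 'a set" and F :: "'a set set"
  assumes two_le_t: "2 \<le> t" and finite_V: "finite V" and F_subset: "F \<subseteq> ksubsets V k"
    and part_subset: "i < t \<Longrightarrow> part i \<subseteq> V"
    and card_part: "i < t \<Longrightarrow> k \<le> card (part i)"
    and part_disjoint: "i < t \<Longrightarrow> j < t \<Longrightarrow> i \<noteq> j \<Longrightarrow> part i \<inter> part j = {}"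
    and part_cover: "(\<Union>i<t. part i) = V"
    and F_profile: "S \<in> ksubsets V k \<Longrightarrow> T \<in> ksubsets V k \<Longrightarrow>
      (\<forall>i<t. card (S \<inter> part i) = card (T \<inter> part i)) \<Longrightarrow> S \<in> F \<longleftrightarrow> T \<in> F"
begin

definition profile :: "'a set \<Rightarrow> nat \<Rightarrow> nat" where
  "profile R = (\<lambda>i. if i < t then card (R \<inter> part i) else 0)"

definition F_ind :: "(nat \<Rightarrow> nat) \<Rightarrow> real" where
  "F_ind v = (if \<exists>R\<in>F. profile R = v then 1 else 0)"

lemma F_ind_01: "F_ind v = 0 \<or> F_ind v = 1"
  by (simp add: F_ind_def)

lemma indicator_eq_F_ind:
  assumes "R \<in> ksubsets V k"
  shows "(if R \<in> F then 1 else 0) = F_ind (profile R)"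
proof -
  have "R \<in> F" if "R' \<in> F" "profile R' = profile R" for R'
  proof -
    have "\<forall>i<t. card (R' \<inter> part i) = card (R \<inter> part i)"
      using that(2) by (simp add: profile_def fun_eq_iff) metis
    then show ?thesis using F_profile[of R' R] that(1) assms F_subset by blast
  qed
  then show ?thesis by (auto simp: F_ind_def)
qed

lemma supported_profile: "supported t (profile R)"
  by (simp add: supported_def profile_def)

lemma finite_part: "i < t \<Longrightarrow> finite (part i)"
  using part_subset finite_V finite_subset by blast

lemma level_profile: "S \<subseteq> V \<Longrightarrow> level t (profile S) = card S"
proof -
  assume S: "S \<subseteq> V"
  have "level t (profile S) = (\<Sum>i<t. card (S \<inter> part i))" by (simp add: level_def profile_def)
  also have "\<dots> = card (\<Union>i<t. S \<inter> part i)"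
    by (rule card_UN_disjoint[symmetric]) (use finite_part part_disjoint in auto)
  also have "(\<Union>i<t. S \<inter> part i) = S" using part_cover S by auto
  finally show ?thesis .
qed

lemma profile_insert:
  assumes "finite R" "a \<notin> R" "p < t" "a \<in> part p"
  shows "profile (insert a R) = profile R + unit_vec p"
proof
  fix i
  have "a \<notin> part i" if "i < t" "i \<noteq> p" using part_disjoint[of i p] that assms by auto
  then show "profile (insert a R) i = (profile R + unit_vec p) i"
    using assms by (auto simp: profile_def)
qed

fun realizes :: "'a \<times> 'a \<Rightarrow> nat \<times> nat \<Rightarrow> bool" where
  "realizes (a, b) (p, q) \<longleftrightarrow> p < t \<and> q < t \<and> p \<noteq> q \<and> a \<in> part p \<and> b \<in> part q"

lemma transversal_sum:
  assumes "list_all2 realizes prs P" "distinct (flat_pairs prs)" "U \<inter> set (flat_pairs prs) = {}"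
    "finite U"
  shows "(\<Sum>R\<in>transversals U prs n. (-1) ^ card (R \<inter> snd ` set prs) * f (profile R))
    = (\<Sum>S\<in>transversals U [] n. delta P f (profile S))"
  using assms(1-3)
proof (induction prs P arbitrary: f rule: list_all2_induct)
  case (Cons ab prs pq P)
  obtain a b p q where ab: "ab = (a, b)" and pq: "pq = (p, q)" by fastforce
  let ?T = "transversals U prs n" and ?B = "snd ` set prs"
  have r: "p < t" "q < t" "a \<in> part p" "b \<in> part q" using Cons.hyps(1) ab pq by auto
  have ab_new: "a \<noteq> b" "a \<notin> U \<union> set (flat_pairs prs)" "b \<notin> U \<union> set (flat_pairs prs)"
    using Cons.prems ab by auto
  have prs: "distinct (flat_pairs prs)" "U \<inter> set (flat_pairs prs) = {}" using Cons.prems ab by auto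
  have "?B \<subseteq> set (flat_pairs prs)" using mem_flat_pairs by fastforce
  then have "a \<notin> ?B" using ab_new by auto
  have T: "finite S" "a \<notin> S" "b \<notin> S" if "S \<in> ?T" for S
    using that ab_new finite_subset[of S] assms(4) by (auto simp: transversals_def)
  let ?h = "\<lambda>R. (-1) ^ card (R \<inter> insert b ?B) * f (profile R)"
  have "(\<Sum>R\<in>transversals U (ab # prs) n. (-1) ^ card (R \<inter> snd ` set (ab # prs)) * f (profile R))
      = (\<Sum>R\<in>insert a ` ?T \<union> insert b ` ?T. ?h R)"
    using transversals_Cons[OF assms(4) ab_new] ab by simp
  also have "\<dots> = (\<Sum>S\<in>?T. ?h (insert a S) + ?h (insert b S))"
    using T by (intro sum_insert_image_Un finite_transversals assms(4) ab_new(1)) auto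
  also have "\<dots> = (\<Sum>S\<in>?T. (-1) ^ card (S \<inter> ?B) * (f (profile S + unit_vec p) - f (profile S + unit_vec q)))"
  proof (rule sum.cong)
    fix S assume S: "S \<in> ?T"
    have "insert a S \<inter> insert b ?B = S \<inter> ?B" using T[OF S] \<open>a \<notin> ?B\<close> ab_new(1) by auto
    moreover have "card (insert b S \<inter> insert b ?B) = Suc (card (S \<inter> ?B))"
      using T[OF S] by (simp add: Int_insert_left)
    moreover have "profile (insert a S) = profile S + unit_vec p" "profile (insert b S) = profile S + unit_vec q"
      using T[OF S] r by (simp_all add: profile_insert)
    ultimately show "?h (insert a S) + ?h (insert b S)
      = (-1) ^ card (S \<inter> ?B) * (f (profile S + unit_vec p) - f (profile S + unit_vec q))"
      by (simp add: algebra_simps)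
  qed simp
  also have "\<dots> = (\<Sum>S\<in>transversals U [] n. delta P (\<lambda>v. f (v + unit_vec p) - f (v + unit_vec q)) (profile S))"
    by (rule Cons.IH[OF prs])
  also have "\<dots> = (\<Sum>S\<in>transversals U [] n. delta (pq # P) f (profile S))"
    by (simp add: pq delta_diff delta_shift)
  finally show ?case .
qed simp

lemma card_V_ge: "t * k \<le> card V"
proof -
  have "t * k = (\<Sum>i<t. k)" by simp
  also have "\<dots> \<le> (\<Sum>i<t. card (V \<inter> part i))"
    using card_part part_subset by (intro sum_mono) (simp add: Int_absorb1)
  also have "\<dots> = card V" using level_profile[of V] by (simp add: level_def profile_def)
  finally show ?thesis .
qed

lemma card_part_Int_flat_pairs_le:
  assumes "list_all2 realizes prs P" "i < t"
  shows "card (part i \<inter> set (flat_pairs prs)) \<le> length prs"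
  using assms(1)
proof (induction prs P rule: list_all2_induct)
  case (Cons ab prs pq P)
  obtain a b p q where ab: "ab = (a, b)" and pq: "pq = (p, q)" by fastforce
  have "\<not> (a \<in> part i \<and> b \<in> part i)"
    using Cons.hyps(1) part_disjoint[of i p] part_disjoint[of i q] assms(2) ab pq by auto
  then have "card (part i \<inter> {a, b}) \<le> 1"
    by (cases "a \<in> part i"; cases "b \<in> part i") auto
  moreover have "part i \<inter> set (flat_pairs (ab # prs)) = (part i \<inter> {a, b}) \<union> (part i \<inter> set (flat_pairs prs))"
    using ab by auto
  ultimately show ?case
    using Cons.IH card_Un_le[of "part i \<inter> {a, b}" "part i \<inter> set (flat_pairs prs)"] by simp
qed simp

lemma exists_realizing_pairs:
  "directions t P \<Longrightarrow> length P \<le> k \<Longrightarrow>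
    \<exists>prs. list_all2 realizes prs P \<and> distinct (flat_pairs prs) \<and> set (flat_pairs prs) \<subseteq> V"
proof (induction P)
  case Nil
  show ?case by simp
next
  case (Cons pq P)
  obtain p q where pq: "pq = (p, q)" by fastforce
  have r: "p < t" "q < t" "p \<noteq> q" using Cons.prems pq by (auto simp: directions_def)
  obtain prs where prs: "list_all2 realizes prs P" "distinct (flat_pairs prs)" "set (flat_pairs prs) \<subseteq> V"
    using Cons by (auto simp: directions_def)
  have fresh: "\<exists>a. a \<in> part i \<and> a \<notin> set (flat_pairs prs)" if "i < t" for i
  proof (rule ccontr)
    assume "\<not> ?thesis"
    then have "part i \<inter> set (flat_pairs prs) = part i" by auto
    then show False
      using card_part_Int_flat_pairs_le[OF prs(1) that] card_part[OF that] Cons.prems(2)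
        list_all2_lengthD[OF prs(1)] by simp
  qed
  obtain a b where "a \<in> part p" "a \<notin> set (flat_pairs prs)" "b \<in> part q" "b \<notin> set (flat_pairs prs)"
    using fresh r by meson
  moreover have "a \<noteq> b" using calculation part_disjoint[OF r] by auto
  ultimately show ?case
    using prs r part_subset pq by (intro exI[of _ "(a, b) # prs"]) auto
qed


lemma exists_delta_F_ind_sum_eq_0:
  assumes P: "directions t P" "length P \<le> k" and W: "WF V k (length P) F = 0"
  obtains SS where "finite SS" "SS \<noteq> {}" "\<And>S. S \<in> SS \<Longrightarrow> S \<subseteq> V \<and> card S = k - length P"
    "(\<Sum>S\<in>SS. delta P F_ind (profile S)) = 0"
proof -
  obtain prs where prs: "list_all2 realizes prs P" "distinct (flat_pairs prs)" "set (flat_pairs prs) \<subseteq> V"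
    using exists_realizing_pairs[OF P] by blast
  have r: "length prs = length P" using list_all2_lengthD[OF prs(1)] by simp
  define U where "U = V - set (flat_pairs prs)"
  have xs: "flat_pairs prs \<in> seqs V (length prs)"
    using prs by (simp add: seqs_def length_flat_pairs)
  have "Wnorm V k (length prs) (\<lambda>R. if R \<in> F then 1 else 0) = 0" using W r by (simp add: WF_def)
  from Wnorm_eq_0_imp_sum_eq_0[OF finite_V this xs]
  have "(\<Sum>R\<in>Rsets V k (length prs) (flat_pairs prs).
      (-1) ^ card (R \<inter> bset (length prs) (flat_pairs prs)) * (if R \<in> F then 1 else 0 :: real)) = 0" .
  moreover have "R \<in> ksubsets V k" if "R \<in> transversals U prs (k - length prs)" for R
    using that prs(3) P(2) r by (auto simp: transversals_def ksubsets_def U_def)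
  ultimately have "(\<Sum>R\<in>transversals U prs (k - length prs).
      (-1) ^ card (R \<inter> snd ` set prs) * F_ind (profile R)) = 0"
    using P(2) unfolding Rsets_flat_pairs[OF prs(3) P(2)[folded r]] bset_flat_pairs U_def
    by (simp add: indicator_eq_F_ind cong: sum.cong)
  moreover have U: "U \<inter> set (flat_pairs prs) = {}" "finite U" using finite_V by (auto simp: U_def)
  note transversal_sum[OF prs(1,2) this, where n = "k - length prs" and f = F_ind]
  ultimately have sum_0: "(\<Sum>S\<in>transversals U [] (k - length P). delta P F_ind (profile S)) = 0"
    unfolding r by argo
  have "card U = card V - 2 * length P"
    using prs(2,3) r by (simp add: U_def card_Diff_subset distinct_card length_flat_pairs)
  then have "k - length P \<le> card U" using card_V_ge two_le_t P(2) mult_le_mono1[of 2 t k] by linarith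
  then obtain S where "S \<subseteq> U" "card S = k - length P" by (rule obtain_subset_with_card_n)
  then have "S \<in> transversals U [] (k - length P)" by (simp add: transversals_Nil)
  moreover have "S' \<subseteq> V \<and> card S' = k - length P" if "S' \<in> transversals U [] (k - length P)" for S'
    using that by (auto simp: transversals_Nil U_def)
  ultimately show thesis using that[OF finite_transversals[OF U(2)] _ _ sum_0] by blast
qed

lemma delta_F_ind_eq_0:
  assumes W: "\<forall>r\<in>{k - g..k}. WF V k r F = 0"
  shows "directions t P \<Longrightarrow> k - g \<le> length P \<Longrightarrow> supported t v \<Longrightarrow> level t v + length P = k \<Longrightarrow>
    delta P F_ind v = 0"
proof (induction "level t v" arbitrary: P v rule: less_induct)
  case less
  let ?j = "level t v"
  have const: "delta P F_ind x = delta P F_ind (0(0 := ?j))" if "supported t x" "level t x = ?j" for x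
  proof (rule constant_on_level[OF _ _ that])
    show "0 < t" using two_le_t by simp
    fix y u w assume y: "supported t y" "Suc (level t y) = ?j" and uw: "u < t" "w < t"
    show "delta P F_ind (y + unit_vec u) = delta P F_ind (y + unit_vec w)"
    proof (cases "u = w")
      case False
      have "delta ((u, w) # P) F_ind y = 0"
        by (rule less.hyps) (use y uw False less.prems in \<open>auto simp: directions_def\<close>)
      then show ?thesis by simp
    qed simp
  qed
  have "length P \<le> k" "WF V k (length P) F = 0" using less.prems W by auto
  then obtain SS where SS: "finite SS" "SS \<noteq> {}" "\<And>S. S \<in> SS \<Longrightarrow> S \<subseteq> V \<and> card S = k - length P"
      "(\<Sum>S\<in>SS. delta P F_ind (profile S)) = 0"
    using exists_delta_F_ind_sum_eq_0[OF less.prems(1)] by metis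
  have "delta P F_ind (profile S) = delta P F_ind (0(0 := ?j))" if "S \<in> SS" for S
    using const supported_profile level_profile SS(3)[OF that] less.prems(4) by auto
  then have "real (card SS) * delta P F_ind (0(0 := ?j)) = 0" using SS(4) by simp
  then show ?case using SS(1,2) const less.prems(3) by simp
qed

theorem homogeneous_if_WF_eq_0:
  assumes "\<forall>r\<in>{k - gfun k..k}. WF V k r F = 0"
  shows "homogeneous V k F"
proof -
  interpret vanishing_differences t k "gfun k" F_ind
    using two_le_t g_ok_gfun F_ind_01 delta_F_ind_eq_0[OF assms] by unfold_locales auto
  define c where "c = F_ind (0(0 := k))"
  have F_iff: "R \<in> F \<longleftrightarrow> c = 1" if "R \<in> ksubsets V k" for R
  proof -
    have "F_ind (profile R) = c"
      using that \<phi>_constant_on_level[OF supported_profile] level_profile by (simp add: ksubsets_def c_def)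
    then show ?thesis using indicator_eq_F_ind[OF that] by (cases "R \<in> F") auto
  qed
  show ?thesis
  proof (cases "c = 1")
    case True
    then have "F = ksubsets V k" using F_iff F_subset by blast
    then show ?thesis by (simp add: homogeneous_def)
  next
    case False
    then have "F = {}" using F_iff F_subset by blast
    then show ?thesis by (simp add: homogeneous_def)
  qed
qed

end

theorem lemma4p3:
  fixes k t :: nat and V :: "'a set" and F :: "'a set set"
  assumes "k \<ge> 2" and "t \<ge> 2"
    and "is_pattern k t k V F"
    and "\<forall>r\<in>{k - gfun k..k}. WF V k r F = 0"
  shows "homogeneous V k F"
proof -
  from assms(3) obtain part :: "nat \<Rightarrow> 'a set" where
    V: "finite V" "F \<subseteq> ksubsets V k" and parts: "\<forall>i<t. part i \<subseteq> V \<and> card (part i) = k"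
    "\<forall>i<t. \<forall>j<t. i \<noteq> j \<longrightarrow> part i \<inter> part j = {}" "(\<Union>i<t. part i) = V"
    and F: "\<forall>S\<in>ksubsets V k. \<forall>T\<in>ksubsets V k.
      (\<forall>i<t. card (S \<inter> part i) = card (T \<inter> part i)) \<longrightarrow> (S \<in> F \<longleftrightarrow> T \<in> F)"
    unfolding is_pattern_def by blast
  interpret pattern_partition t k V part F
  proof
    show "k \<le> card (part i)" if "i < t" for i using parts(1) that by simp
  qed (use assms(2) V parts F in blast)+
  show ?thesis using assms(4) by (rule homogeneous_if_WF_eq_0)
qed

end
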